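(* Let $\Gamma$ be an extended Dynkin graph with standard integral Cartan matrix and $v\in\mathbb{R}^I$ a configuration. Suppose there are two ways, beginning with $v$, of successively firing vertices of amplitude $<-1$ until no vertex of amplitude $<-1$ is left. Then these two firing sequences have the same length and terminate at the same configuration.
   Context: $\Gamma$ is an extended Dynkin graph with vertex set $I$ and standard integral generalized Cartan matrix $C=(c_{ij})$. Firing vertex $i$ replaces $v\in\mathbb{R}^I$ by $f_i(v)$, where $f_i(v)_i=-v_i$, $f_i(v)_j=v_j-c_{ij}v_i$ if $j$ is adjacent to $i$, and $f_i(v)_j=v_j$ otherwise; "firing a vertex of amplitude $<-1$" means firing $i$ when $v_i<-1$. *)

theory Defs
  imports Complex_Main
begin

text \<open>Vertex set I = UNIV of a finite type 'i; C is the (integral) Cartan matrix.\<close>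

definition gcm :: "('i::finite \<Rightarrow> 'i \<Rightarrow> int) \<Rightarrow> bool" where
  "gcm C \<longleftrightarrow> (\<forall>i. C i i = 2) \<and> (\<forall>i j. i \<noteq> j \<longrightarrow> C i j \<le> 0)
              \<and> (\<forall>i j. C i j = 0 \<longleftrightarrow> C j i = 0)"

definition adjacent :: "('i \<Rightarrow> 'i \<Rightarrow> int) \<Rightarrow> 'i \<Rightarrow> 'i \<Rightarrow> bool" where
  "adjacent C i j \<longleftrightarrow> i \<noteq> j \<and> C i j \<noteq> 0"

definition indecomposable :: "('i::finite \<Rightarrow> 'i \<Rightarrow> int) \<Rightarrow> bool" where
  "indecomposable C \<longleftrightarrow> (\<forall>i j. (i, j) \<in> {(a, b). adjacent C a b}\<^sup>*)"

text \<open>Affine type (Kac, Thm. 4.3): indecomposable GCM admitting a vector with all entries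
  positive in its kernel. These are exactly the Cartan matrices of extended Dynkin graphs.\<close>
definition extended_dynkin :: "('i::finite \<Rightarrow> 'i \<Rightarrow> int) \<Rightarrow> bool" where
  "extended_dynkin C \<longleftrightarrow> gcm C \<and> indecomposable C \<and>
     (\<exists>\<delta>::'i \<Rightarrow> real. (\<forall>i. \<delta> i > 0) \<and> (\<forall>i. (\<Sum>j\<in>UNIV. of_int (C i j) * \<delta> j) = 0))"

definition fire :: "('i \<Rightarrow> 'i \<Rightarrow> int) \<Rightarrow> 'i \<Rightarrow> ('i \<Rightarrow> real) \<Rightarrow> ('i \<Rightarrow> real)" where
  "fire C i v = (\<lambda>j. if j = i then - v i
                     else if adjacent C i j then v j - of_int (C i j) * v i
                     else v j)"

fun play :: "('i \<Rightarrow> 'i \<Rightarrow> int) \<Rightarrow> ('i \<Rightarrow> real) \<Rightarrow> 'i list \<Rightarrow> ('i \<Rightarrow> real)" where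
  "play C v [] = v"
| "play C v (i # xs) = play C (fire C i v) xs"

fun legal :: "('i \<Rightarrow> 'i \<Rightarrow> int) \<Rightarrow> ('i \<Rightarrow> real) \<Rightarrow> 'i list \<Rightarrow> bool" where
  "legal C v [] = True"
| "legal C v (i # xs) = (v i < -1 \<and> legal C (fire C i v) xs)"

definition terminal :: "('i \<Rightarrow> real) \<Rightarrow> bool" where
  "terminal v \<longleftrightarrow> (\<forall>i. \<not> v i < -1)"

end

theory Submission
  imports Defs
begin

text \<open>The game is locally confluent in Eriksson's sense. Let two distinct vertices \<open>i, j\<close>
  both be fireable. If \<open>C i j * C j i \<ge> 4\<close>, firing \<open>i, j, i, j, \<dots>\<close> alternately stays legal
  forever, so no terminating game can start at the configuration. Otherwise the product is
  \<open>0, 1, 2\<close> or \<open>3\<close>, and alternately firing \<open>m = 2, 3, 4, 6\<close> vertices starting with \<open>i\<close> or with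
  \<open>j\<close> is legal in both cases and leads to the same configuration. Induction on the length
  of a terminating game then shows that every legal game from the same start is at most as
  long, and if it terminates it has the same length and end configuration.\<close>

lemma fire_eq: "C i i = 2 \<Longrightarrow> fire C i v = (\<lambda>k. v k - of_int (C i k) * v i)"
  by (auto simp: fire_def adjacent_def fun_eq_iff)

lemma legal_append: "legal C v (xs @ ys) \<longleftrightarrow> legal C v xs \<and> legal C (play C v xs) ys"
  by (induction xs arbitrary: v) auto

lemma play_append: "play C v (xs @ ys) = play C (play C v xs) ys"
  by (induction xs arbitrary: v) auto

fun alternate :: "'i \<Rightarrow> 'i \<Rightarrow> nat \<Rightarrow> 'i list" where
  "alternate i j 0 = []"
| "alternate i j (Suc n) = i # alternate j i n"

lemma length_alternate [simp]: "length (alternate i j n) = n"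
  by (induction n arbitrary: i j) auto

text \<open>The state \<open>(a, b) = (v i, v j)\<close> becomes \<open>(b + r a, -a)\<close> when \<open>i\<close> is fired, with
  \<open>r = - C i j\<close>, \<open>s = - C j i\<close> and \<open>t = sqrt (r s) \<ge> 2\<close>; the invariant is preserved with the
  roles of \<open>r\<close> and \<open>s\<close> exchanged.\<close>

lemma alternation_invariant_step:
  fixes r s t a b :: real
  assumes "r > 0" "s > 0" "t \<ge> 2" "t * t = r * s"
    and "a < -1" "r * a + t * b \<le> 0" "b < -1 \<or> b > 1"
  shows "b + r * a < -1" "s * (b + r * a) + t * (- a) \<le> 0"
proof -
  show "b + r * a < -1"
  proof (cases "b < -1")
    case True
    moreover have "r * a < 0" using assms by (simp add: mult_pos_neg)
    ultimately show ?thesis by linarith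
  next
    case False
    then have "b > 1" using assms by auto
    moreover have "2 * b \<le> t * b" using \<open>b > 1\<close> assms by (intro mult_right_mono) auto
    ultimately show ?thesis using assms by linarith
  qed
  have "t * (s * b) \<le> t * (- t * a)"
    using mult_left_mono[OF assms(6) less_imp_le[OF assms(2)]] assms(4)
    by (simp add: algebra_simps)
  then have "s * b \<le> - t * a" using assms(3) mult_le_cancel_left_pos[of t "s * b" "- t * a"]
    by simp
  moreover have "t * (t - 2) * a \<le> 0" using assms by (intro mult_nonneg_nonpos) auto
  ultimately show "s * (b + r * a) + t * (- a) \<le> 0"
    using assms(4) by (simp add: algebra_simps)
qed

lemma legal_alternate_invariant:
  assumes "gcm C" "i \<noteq> j" "C i j < 0" "C j i < 0" "t \<ge> 2"
    and "t * t = of_int (C i j * C j i)"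
    and "v i < -1" "- of_int (C i j) * v i + t * v j \<le> 0" "v j < -1 \<or> v j > 1"
  shows "legal C v (alternate i j n)"
  using assms
proof (induction n arbitrary: i j v)
  case 0
  then show ?case by simp
next
  case (Suc n)
  let ?r = "- real_of_int (C i j)" and ?s = "- real_of_int (C j i)"
  have step: "v j + ?r * v i < -1" "?s * (v j + ?r * v i) + t * (- v i) \<le> 0"
    using alternation_invariant_step[of ?r ?s t "v i" "v j"] Suc.prems
    by (auto simp: algebra_simps)
  have "C i i = 2" using Suc.prems by (simp add: gcm_def)
  then have fire_i: "fire C i v j = v j + ?r * v i" "fire C i v i = - v i"
    by (auto simp: fire_eq)
  have "legal C (fire C i v) (alternate j i n)"
    using step Suc.prems by (intro Suc.IH) (auto simp: fire_i mult.commute)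
  then show ?case using Suc.prems by simp
qed

lemma legal_alternate_if_product_ge_4:
  assumes "gcm C" "i \<noteq> j" "C i j * C j i \<ge> 4" "v i < -1" "v j < -1"
  shows "legal C v (alternate i j n)"
proof -
  have "C i j \<noteq> 0" using assms(3) by auto
  moreover have "C i j \<le> 0" "C j i \<le> 0" "C j i \<noteq> 0"
    using assms(1,2) \<open>C i j \<noteq> 0\<close> by (auto simp: gcm_def)
  ultimately have neg: "C i j < 0" "C j i < 0" by auto
  define t where "t = sqrt (of_int (C i j * C j i))"
  have tt: "t * t = of_int (C i j * C j i)"
    unfolding t_def using assms(3) by (simp del: of_int_mult)
  have t2: "t \<ge> 2"
    unfolding t_def using assms(3) real_le_rsqrt[of 2 "of_int (C i j * C j i)"]
    by (simp del: of_int_mult)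
  have "0 \<le> of_int (C i j) * v i" using neg assms(4) by (intro mult_nonpos_nonpos) auto
  moreover have "t * v j \<le> 0" using t2 assms(5) by (simp add: mult_nonneg_nonpos)
  ultimately have "- of_int (C i j) * v i + t * v j \<le> 0" by linarith
  then show ?thesis
    using legal_alternate_invariant[of C i j t v, OF assms(1,2) neg t2 tt assms(4)] assms(5) by simp
qed

text \<open>The lengths \<open>2, 3, 4, 6\<close> are the orders of the rotations in the dihedral Weyl groups of
  types \<open>A1 \<times> A1\<close>, \<open>A2\<close>, \<open>B2\<close> and \<open>G2\<close>.\<close>

lemma polygon_move_2:
  assumes "C i i = 2" "C j j = 2" "C i j = 0" "C j i = 0" "v i < -1" "v j < -1"
  shows "legal C v (alternate i j 2) \<and> legal C v (alternate j i 2)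
    \<and> play C v (alternate i j 2) = play C v (alternate j i 2)"
  using assms by (simp add: numeral_eq_Suc fire_eq fun_eq_iff algebra_simps)

lemma polygon_move_3:
  assumes "C i i = 2" "C j j = 2" "C i j = -1" "C j i = -1" "v i < -1" "v j < -1"
  shows "legal C v (alternate i j 3) \<and> legal C v (alternate j i 3)
    \<and> play C v (alternate i j 3) = play C v (alternate j i 3)"
  using assms by (simp add: numeral_eq_Suc fire_eq fun_eq_iff algebra_simps)

lemma polygon_move_4:
  assumes "C i i = 2" "C j j = 2" "C i j = -1" "C j i = -2" "v i < -1" "v j < -1"
  shows "legal C v (alternate i j 4) \<and> legal C v (alternate j i 4)
    \<and> play C v (alternate i j 4) = play C v (alternate j i 4)"
  using assms by (simp add: numeral_eq_Suc fire_eq fun_eq_iff algebra_simps)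

lemma polygon_move_6:
  assumes "C i i = 2" "C j j = 2" "C i j = -1" "C j i = -3" "v i < -1" "v j < -1"
  shows "legal C v (alternate i j 6) \<and> legal C v (alternate j i 6)
    \<and> play C v (alternate i j 6) = play C v (alternate j i 6)"
  using assms by (simp add: numeral_eq_Suc fire_eq fun_eq_iff algebra_simps)

lemma gcm_product_le_3_cases:
  assumes "gcm C" "i \<noteq> j" "C i j * C j i \<le> 3"
  obtains "C i j = 0" "C j i = 0"
    | "C i j = -1" "C j i = -1"
    | "C i j = -1" "C j i = -2"
    | "C i j = -2" "C j i = -1"
    | "C i j = -1" "C j i = -3"
    | "C i j = -3" "C j i = -1"
proof (cases "C i j = 0")
  case True
  then show ?thesis using assms(1) that(1) by (simp add: gcm_def)
next
  case False
  moreover have "C i j \<le> 0" "C j i \<le> 0" "C j i \<noteq> 0"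
    using assms(1,2) False by (auto simp: gcm_def)
  ultimately have pos: "- C i j \<ge> 1" "- C j i \<ge> 1" by auto
  have prod: "(- C i j) * (- C j i) \<le> 3" using assms(3) by simp
  have "- C i j \<le> 3" using mult_left_mono[OF pos(2), of "- C i j"] pos prod by simp
  moreover have "- C j i \<le> 3" using mult_right_mono[OF pos(1), of "- C j i"] pos prod by simp
  ultimately have "C i j \<in> {-3, -2, -1}" "C j i \<in> {-3, -2, -1}" using pos by auto
  then show ?thesis using prod that by auto
qed

lemma polygon_move:
  assumes "gcm C" "i \<noteq> j" "C i j * C j i \<le> 3" "v i < -1" "v j < -1"
  obtains m where "m \<ge> 1" "legal C v (alternate i j m)" "legal C v (alternate j i m)"
    "play C v (alternate i j m) = play C v (alternate j i m)"
proof -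
  have diag: "C i i = 2" "C j j = 2" using assms(1) by (simp_all add: gcm_def)
  from assms(1-3) show ?thesis
  proof (cases rule: gcm_product_le_3_cases)
    case 1 then show ?thesis using polygon_move_2[of C i j v] diag assms that[of 2] by auto
  next
    case 2 then show ?thesis using polygon_move_3[of C i j v] diag assms that[of 3] by auto
  next
    case 3 then show ?thesis using polygon_move_4[of C i j v] diag assms that[of 4] by auto
  next
    case 4 then show ?thesis using polygon_move_4[of C j i v] diag assms that[of 4] by auto
  next
    case 5 then show ?thesis using polygon_move_6[of C i j v] diag assms that[of 6] by auto
  next
    case 6 then show ?thesis using polygon_move_6[of C j i v] diag assms that[of 6] by auto
  qed
qed

definition converges_to :: "('i \<Rightarrow> 'i \<Rightarrow> int) \<Rightarrow> ('i \<Rightarrow> real) \<Rightarrow> nat \<Rightarrow> ('i \<Rightarrow> real) \<Rightarrow> bool"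
  where "converges_to C v n u \<longleftrightarrow> (\<forall>zs. legal C v zs \<longrightarrow>
    length zs \<le> n \<and> (terminal (play C v zs) \<longrightarrow> length zs = n \<and> play C v zs = u))"

lemma terminal_play_exists_if_bounded:
  "(\<And>zs. legal C v zs \<Longrightarrow> length zs \<le> n) \<Longrightarrow> \<exists>zs. legal C v zs \<and> terminal (play C v zs)"
proof (induction n arbitrary: v)
  case 0
  have "terminal v"
  proof (rule ccontr)
    assume "\<not> terminal v"
    then obtain k where "v k < -1" by (auto simp: terminal_def)
    then show False using "0.prems"[of "[k]"] by simp
  qed
  then show ?case by (intro exI[of _ "[]"]) simp
next
  case (Suc n)
  show ?case
  proof (cases "terminal v")
    case True
    then show ?thesis by (intro exI[of _ "[]"]) simp
  next
    case False
    then obtain k where k: "v k < -1" by (auto simp: terminal_def)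
    have "length zs \<le> n" if "legal C (fire C k v) zs" for zs
      using Suc.prems[of "k # zs"] k that by simp
    then obtain zs where "legal C (fire C k v) zs" "terminal (play C (fire C k v) zs)"
      using Suc.IH by blast
    then show ?thesis using k by (intro exI[of _ "k # zs"]) simp
  qed
qed

lemma converges_to_Suc:
  assumes "v i < -1" "\<And>j. v j < -1 \<Longrightarrow> converges_to C (fire C j v) n u"
  shows "converges_to C v (Suc n) u"
  unfolding converges_to_def
proof (intro allI impI)
  fix zs assume zs: "legal C v zs"
  show "length zs \<le> Suc n \<and>
      (terminal (play C v zs) \<longrightarrow> length zs = Suc n \<and> play C v zs = u)"
  proof (cases zs)
    case Nil
    then show ?thesis using assms(1) by (auto simp: terminal_def)
  next
    case (Cons j zs')
    with zs have "v j < -1" "legal C (fire C j v) zs'" by simp_all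
    with assms(2) Cons show ?thesis by (simp add: converges_to_def)
  qed
qed

lemma local_confluence:
  assumes "gcm C" "i \<noteq> j" "v i < -1" "v j < -1"
    and conv: "converges_to C (fire C i v) n u"
  obtains us where "legal C (fire C j v) us" "terminal (play C (fire C j v) us)"
    "length us = n" "play C (fire C j v) us = u"
proof (cases "C i j * C j i \<ge> 4")
  case True
  then have "legal C v (alternate i j (Suc (Suc n)))"
    using legal_alternate_if_product_ge_4 assms(1-4) by blast
  then have "legal C (fire C i v) (alternate j i (Suc n))" by simp
  from conv[unfolded converges_to_def, rule_format, OF this] show ?thesis by simp
next
  case False
  then obtain m where m: "m \<ge> 1" "legal C v (alternate i j m)" "legal C v (alternate j i m)"
    "play C v (alternate i j m) = play C v (alternate j i m)"
    using polygon_move[OF assms(1,2) _ assms(3,4)] by force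
  then obtain k where "m = Suc k" by (cases m) auto
  define w where "w = play C v (alternate i j m)"
  have i_first: "legal C (fire C i v) (alternate j i k)" "play C (fire C i v) (alternate j i k) = w"
    and j_first: "legal C (fire C j v) (alternate i j k)" "play C (fire C j v) (alternate i j k) = w"
    using m \<open>m = Suc k\<close> w_def by auto
  have conv_w: "k + length zs \<le> n \<and>
      (terminal (play C w zs) \<longrightarrow> k + length zs = n \<and> play C w zs = u)"
    if "legal C w zs" for zs
  proof -
    have "legal C (fire C i v) (alternate j i k @ zs)" using i_first that by (simp add: legal_append)
    from conv[unfolded converges_to_def, rule_format, OF this] show ?thesis
      using i_first by (simp add: play_append)
  qed
  then obtain zs where zs: "legal C w zs" "terminal (play C w zs)"
    using terminal_play_exists_if_bounded[of C w "n - k"] by fastforce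
  with conv_w have "k + length zs = n" "play C w zs = u" by simp_all
  then show ?thesis
    using that[of "alternate i j k @ zs"] zs j_first by (simp add: legal_append play_append)
qed

theorem terminal_play_converges:
  assumes "gcm C" "legal C v xs" "terminal (play C v xs)"
  shows "converges_to C v (length xs) (play C v xs)"
  using assms(2,3)
proof (induction "length xs" arbitrary: v xs)
  case 0
  then show ?case by (auto simp: converges_to_def terminal_def elim: legal.elims)
next
  case (Suc n)
  then obtain i xs' where xs: "xs = i # xs'" "length xs' = n" by (cases xs) auto
  with Suc have vi: "v i < -1" and conv_i: "converges_to C (fire C i v) n (play C v xs)"
    by auto
  have "converges_to C (fire C j v) n (play C v xs)" if vj: "v j < -1" for j
  proof (cases "j = i")
    case False
    then have "i \<noteq> j" by simp
    obtain us where "legal C (fire C j v) us" "terminal (play C (fire C j v) us)"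
      "length us = n" "play C (fire C j v) us = play C v xs"
      using local_confluence[OF assms(1) \<open>i \<noteq> j\<close> vi vj conv_i] by blast
    with Suc.hyps(1)[of us "fire C j v"] show ?thesis by simp
  qed (use conv_i in simp)
  then show ?case using converges_to_Suc[of v i C n, OF vi] Suc.hyps(2) by simp
qed

theorem corollary3p5:
  fixes C :: "'i::finite \<Rightarrow> 'i \<Rightarrow> int" and v :: "'i \<Rightarrow> real"
    and xs ys :: "'i list"
  assumes "extended_dynkin C"
    and "legal C v xs" and "terminal (play C v xs)"
    and "legal C v ys" and "terminal (play C v ys)"
  shows "length xs = length ys \<and> play C v xs = play C v ys"
proof -
  have "gcm C" using assms(1) by (simp add: extended_dynkin_def)
  with assms(2,3) have "converges_to C v (length xs) (play C v xs)"
    by (rule terminal_play_converges[rotated])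
  with assms(4,5) show ?thesis by (simp add: converges_to_def)
qed

end
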